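(* Let $\mathcal{D}$ be a bounded convex domain in a complex Banach space $X$, and let $\mathcal{F}=\{F_t\}_{t\ge0}$ be a one-parameter continuous semigroup of holomorphic self-mappings of $\mathcal{D}$. Then $\mathcal{F}$ acts strictly inside $\mathcal{D}$: for every subset $\mathcal{D}^*$ lying strictly inside $\mathcal{D}$ and every $t_0>0$, the set $\{F_t(x):\ x\in\mathcal{D}^*,\ t\in[0,t_0]\}$ lies strictly inside $\mathcal{D}$.
   Context: A subset $\mathcal{D}^*\subset\mathcal{D}$ lies strictly inside $\mathcal{D}$ if it is bounded and $\inf_{x\in\mathcal{D}^*}\operatorname{dist}(x,\partial\mathcal{D})>0$. A one-parameter continuous semigroup on $\mathcal{D}$ is a family $\{F_t\}_{t\ge0}$ of (Fréchet) holomorphic maps $F_t:\mathcal{D}\to\mathcal{D}$ such that $F_{t+s}=F_t\circ F_s$ for all $t,s\ge0$ and $\lim_{t\to0^+}F_t(x)=x$ for every $x\in\mathcal{D}$. *)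

theory Defs
  imports "HOL-Analysis.Analysis"
begin

class complex_banach = banach +
  fixes scaleC :: "complex \<Rightarrow> 'a \<Rightarrow> 'a"
  assumes scaleC_of_real: "scaleC (complex_of_real r) x = r *\<^sub>R x"
    and scaleC_add_right: "scaleC a (x + y) = scaleC a x + scaleC a y"
    and scaleC_add_left: "scaleC (a + b) x = scaleC a x + scaleC b x"
    and scaleC_scaleC: "scaleC a (scaleC b x) = scaleC (a * b) x"
    and norm_scaleC: "norm (scaleC a x) = cmod a * norm x"

definition frechet_holomorphic_on ::
  "('a::complex_banach \<Rightarrow> 'b::complex_banach) \<Rightarrow> 'a set \<Rightarrow> bool" where
  "frechet_holomorphic_on f S \<longleftrightarrow>
     (\<forall>x\<in>S. \<exists>f'. (f has_derivative f') (at x) \<and> (\<forall>a h. f' (scaleC a h) = scaleC a (f' h)))"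

definition strictly_inside :: "'a::real_normed_vector set \<Rightarrow> 'a set \<Rightarrow> bool" where
  "strictly_inside Ds D \<longleftrightarrow> Ds \<subseteq> D \<and> bounded Ds \<and>
     (\<exists>e>0. \<forall>x\<in>Ds. infdist x (frontier D) \<ge> e)"

definition continuous_holo_semigroup ::
  "(real \<Rightarrow> 'a::complex_banach \<Rightarrow> 'a) \<Rightarrow> 'a set \<Rightarrow> bool" where
  "continuous_holo_semigroup F D \<longleftrightarrow>
     (\<forall>t\<ge>0. frechet_holomorphic_on (F t) D \<and> F t ` D \<subseteq> D) \<and>
     (\<forall>t\<ge>0. \<forall>s\<ge>0. \<forall>x\<in>D. F (t + s) x = F t (F s x)) \<and>
     (\<forall>x\<in>D. ((\<lambda>t. F t x) \<longlongrightarrow> x) (at_right 0))"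

end

theory Submission
  imports Defs "HOL-Complex_Analysis.Complex_Analysis"
begin

text \<open>Fix a ball \<open>ball c r \<subseteq> D\<close>. For a holomorphic map \<open>H\<close> of \<open>D\<close> into the unit disc,
  the Schwarz--Pick lemma on a complex line shows that \<open>(1 + |H z|) / (1 - |H z|)\<close> grows at most
  by the factor \<open>3\<close> along a step of length \<open>\<rho>/2\<close> from the centre of a ball of radius \<open>\<rho>\<close> in
  \<open>D\<close>. Chaining such steps along the orbit \<open>t \<mapsto> F t c\<close> (using \<open>F (t + s) = F t \<circ> F s\<close> and
  continuity at \<open>t = 0\<close>), and then, after composing \<open>H\<close> with \<open>F t\<close>, along segments from \<open>c\<close> to
  points of \<open>D\<^sup>*\<close> (convexity), bounds this quantity at all points \<open>F t x\<close>, \<open>x \<in> D\<^sup>*\<close>,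
  \<open>t \<le> t\<^sub>0\<close>, uniformly in \<open>H\<close> with \<open>H c = 0\<close>. Conversely, for \<open>q \<notin> D\<close> a Hahn--Banach
  separating functional yields such an \<open>H\<close> for which it is at least \<open>r / (8 |q - y|)\<close> at
  every \<open>y \<in> D\<close>. Hence these points stay a uniform distance away from the boundary.\<close>

section \<open>Hahn--Banach for sublinear functionals\<close>

definition sublinear :: "('a::real_vector \<Rightarrow> real) \<Rightarrow> bool" where
  "sublinear p \<longleftrightarrow> (\<forall>x y. p (x + y) \<le> p x + p y) \<and> (\<forall>s x. 0 < s \<longrightarrow> p (s *\<^sub>R x) = s * p x)"

lemma sublinear_add: "sublinear p \<Longrightarrow> p (x + y) \<le> p x + p y"
  unfolding sublinear_def by blast

lemma sublinear_scaleR: "sublinear p \<Longrightarrow> 0 < s \<Longrightarrow> p (s *\<^sub>R x) = s * p x"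
  unfolding sublinear_def by blast

lemma sublinear_zero: "sublinear p \<Longrightarrow> p 0 = 0"
  using sublinear_scaleR[of p 2 0] by simp

lemma sublinear_neg_le: "sublinear p \<Longrightarrow> - p (- x) \<le> p x"
  using sublinear_add[of p x "- x"] sublinear_zero[of p] by simp

lemma sublinearI:
  assumes "\<And>x y. p (x + y) \<le> p x + p y"
    and "\<And>s x. 0 < s \<Longrightarrow> p (s *\<^sub>R x) / s \<le> p x"
    and "\<And>s x. 0 < s \<Longrightarrow> s * p x \<le> p (s *\<^sub>R x)"
  shows "sublinear p"
  unfolding sublinear_def
proof (intro conjI allI impI)
  fix s :: real and x assume "0 < s"
  with assms(2,3)[of s x] show "p (s *\<^sub>R x) = s * p x" by (simp add: field_simps)
qed (fact assms(1))

text \<open>A minimal sublinear functional below \<open>p\<close> (Zorn) equals all its reductions and is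
  therefore linear; this is the route to Hahn--Banach taken here.\<close>
definition sublinear_reduce :: "('a::real_vector \<Rightarrow> real) \<Rightarrow> 'a \<Rightarrow> 'a \<Rightarrow> real" where
  "sublinear_reduce p y x = (INF t\<in>{0<..}. p (x + t *\<^sub>R y) - t * p y)"

lemma sublinear_reduce_le:
  assumes p: "sublinear p" and t: "t > 0"
  shows "sublinear_reduce p y x \<le> p (x + t *\<^sub>R y) - t * p y"
  unfolding sublinear_reduce_def
proof (rule cInf_lower)
  have "- p (- x) \<le> p (x + s *\<^sub>R y) - s * p y" if "s > 0" for s
    using sublinear_add[OF p, of "x + s *\<^sub>R y" "- x"] sublinear_scaleR[OF p that, of y] by simp
  then show "bdd_below ((\<lambda>t. p (x + t *\<^sub>R y) - t * p y) ` {0<..})"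
    by (intro bdd_belowI[of _ "- p (- x)"]) auto
qed (use t in auto)

lemma sublinear_reduce_greatest:
  "(\<And>t. t > 0 \<Longrightarrow> b \<le> p (x + t *\<^sub>R y) - t * p y) \<Longrightarrow> b \<le> sublinear_reduce p y x"
  unfolding sublinear_reduce_def by (rule cINF_greatest) auto

lemma sublinear_reduce_le_self: "sublinear p \<Longrightarrow> sublinear_reduce p y x \<le> p x"
  using sublinear_reduce_le[of p 1 y x] sublinear_add[of p x y] by simp

lemma sublinear_reduce_neg: "sublinear p \<Longrightarrow> sublinear_reduce p y (- y) \<le> - p y"
  using sublinear_reduce_le[of p 1 y "- y"] sublinear_zero[of p] by simp

lemma sublinear_sublinear_reduce:
  assumes p: "sublinear p"
  shows "sublinear (sublinear_reduce p y)"
proof (rule sublinearI)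
  let ?q = "sublinear_reduce p y"
  fix x1 x2
  have "?q (x1 + x2) - (p (x2 + t2 *\<^sub>R y) - t2 * p y) \<le> p (x1 + t1 *\<^sub>R y) - t1 * p y"
    if "t1 > 0" "t2 > 0" for t1 t2
  proof -
    have "?q (x1 + x2) \<le> p ((x1 + t1 *\<^sub>R y) + (x2 + t2 *\<^sub>R y)) - (t1 + t2) * p y"
      using sublinear_reduce_le[OF p, of "t1 + t2" y "x1 + x2"] that
      by (simp add: algebra_simps scaleR_add_left)
    with sublinear_add[OF p, of "x1 + t1 *\<^sub>R y" "x2 + t2 *\<^sub>R y"] show ?thesis
      by (simp add: algebra_simps)
  qed
  then have "?q (x1 + x2) - (p (x2 + t2 *\<^sub>R y) - t2 * p y) \<le> ?q x1" if "t2 > 0" for t2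
    using that by (intro sublinear_reduce_greatest) auto
  then have "?q (x1 + x2) - ?q x1 \<le> ?q x2"
    by (intro sublinear_reduce_greatest) (simp add: algebra_simps)
  then show "?q (x1 + x2) \<le> ?q x1 + ?q x2" by simp
next
  let ?q = "sublinear_reduce p y"
  fix s :: real and x assume s: "0 < s"
  show "?q (s *\<^sub>R x) / s \<le> ?q x"
  proof (rule sublinear_reduce_greatest)
    fix t :: real assume t: "t > 0"
    have "?q (s *\<^sub>R x) \<le> p (s *\<^sub>R (x + t *\<^sub>R y)) - (s * t) * p y"
      using sublinear_reduce_le[OF p, of "s * t" y "s *\<^sub>R x"] s t by (simp add: scaleR_add_right)
    then show "?q (s *\<^sub>R x) / s \<le> p (x + t *\<^sub>R y) - t * p y"
      using s sublinear_scaleR[OF p s, of "x + t *\<^sub>R y"] by (simp add: field_simps)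
  qed
  show "s * ?q x \<le> ?q (s *\<^sub>R x)"
  proof (rule sublinear_reduce_greatest)
    fix t :: real assume t: "t > 0"
    have "?q x \<le> p (x + (t / s) *\<^sub>R y) - (t / s) * p y"
      using sublinear_reduce_le[OF p, of "t / s"] s t by simp
    moreover have "s * p (x + (t / s) *\<^sub>R y) = p (s *\<^sub>R x + t *\<^sub>R y)"
      using sublinear_scaleR[OF p s, of "x + (t / s) *\<^sub>R y"] s by (simp add: scaleR_add_right)
    ultimately show "s * ?q x \<le> p (s *\<^sub>R x + t *\<^sub>R y) - t * p y"
      using s by (simp add: field_simps)
  qed
qed

lemma sublinear_fixed_by_reduce_imp_linear:
  assumes m: "sublinear m" and fixed: "\<And>y. sublinear_reduce m y = m"
  shows "linear m"
proof (rule linearI)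
  have neg: "m (- y) = - m y" for y
    using sublinear_reduce_neg[OF m, of y] fixed[of y] sublinear_neg_le[OF m, of y] by simp
  show "m (x + y) = m x + m y" for x y
    using sublinear_add[OF m, of x y] sublinear_add[OF m, of "x + y" "- y"] neg[of y] by simp
  show "m (c *\<^sub>R x) = c *\<^sub>R m x" for c x
  proof (cases c "0 :: real" rule: linorder_cases)
    case less
    then show ?thesis using sublinear_scaleR[OF m, of "- c" x] neg[of "(- c) *\<^sub>R x"] by simp
  qed (use sublinear_zero[OF m] sublinear_scaleR[OF m] in auto)
qed

lemma sublinear_chain_Inf:
  assumes ne: "C \<noteq> {}" and sub: "\<And>q. q \<in> C \<Longrightarrow> sublinear q"
    and chain: "\<And>q q'. q \<in> C \<Longrightarrow> q' \<in> C \<Longrightarrow> q \<le> q' \<or> q' \<le> q"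
    and bdd: "\<And>x. bdd_below ((\<lambda>q. q x) ` C)"
  shows "sublinear (\<lambda>x. INF q\<in>C. q x)"
proof -
  let ?u = "\<lambda>x. INF q\<in>C. q x"
  have lower: "?u x \<le> q x" if "q \<in> C" for q x
    using that bdd by (intro cINF_lower) auto
  show ?thesis
  proof (rule sublinearI)
    fix x y
    have "?u (x + y) - q' y \<le> q x" if "q \<in> C" "q' \<in> C" for q q'
      using chain[OF that]
    proof
      assume "q \<le> q'"
      then show ?thesis
        using lower[OF that(1), of "x + y"] sublinear_add[OF sub[OF that(1)], of x y] le_funD[of q q' y]
        by linarith
    next
      assume "q' \<le> q"
      then show ?thesis
        using lower[OF that(2), of "x + y"] sublinear_add[OF sub[OF that(2)], of x y] le_funD[of q' q x]
        by linarith
    qed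
    then have "?u (x + y) - q' y \<le> ?u x" if "q' \<in> C" for q'
      using ne that by (intro cINF_greatest) auto
    then have "?u (x + y) - ?u x \<le> ?u y"
      using ne by (intro cINF_greatest) (auto simp: algebra_simps)
    then show "?u (x + y) \<le> ?u x + ?u y" by simp
  next
    fix s :: real and x assume s: "0 < s"
    have "?u (s *\<^sub>R x) / s \<le> q x" if "q \<in> C" for q
      using lower[OF that, of "s *\<^sub>R x"] sublinear_scaleR[OF sub[OF that] s] s
      by (simp add: field_simps)
    then show "?u (s *\<^sub>R x) / s \<le> ?u x"
      using ne by (intro cINF_greatest) auto
    have "s * ?u x \<le> q (s *\<^sub>R x)" if "q \<in> C" for q
      using lower[OF that, of x] sublinear_scaleR[OF sub[OF that] s] s by simp
    then show "s * ?u x \<le> ?u (s *\<^sub>R x)"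
      using ne by (intro cINF_greatest) auto
  qed
qed

lemma exists_minimal_sublinear_below:
  assumes p: "sublinear p"
  shows "\<exists>m. sublinear m \<and> m \<le> p \<and> (\<forall>q. sublinear q \<and> q \<le> m \<longrightarrow> q = m)"
proof -
  define A where "A = {q. sublinear q \<and> q \<le> p}"
  define P where "P = (\<lambda>q q' :: 'a \<Rightarrow> real. q' \<le> q)"
  have po: "partial_order_on A (relation_of P A)"
    unfolding partial_order_on_def preorder_on_def refl_on_def trans_def antisym_def
      relation_of_def P_def
    by auto
  have "\<exists>u\<in>A. \<forall>q\<in>C. P q u" if C: "C \<in> Chains (relation_of P A)" for C
  proof (cases "C = {}")
    case True
    then show ?thesis using p by (auto simp: A_def)
  next
    case False
    have CA: "C \<subseteq> A" using Chains_relation_of[OF C] .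
    have "- p (- x) \<le> q x" if "q \<in> C" for q x
    proof -
      have "sublinear q" "q (- x) \<le> p (- x)" using CA that by (auto simp: A_def le_fun_def)
      with sublinear_neg_le[of q x] show ?thesis by linarith
    qed
    then have bdd: "bdd_below ((\<lambda>q. q x) ` C)" for x
      by (intro bdd_belowI[of _ "- p (- x)"]) auto
    have chain: "q \<le> q' \<or> q' \<le> q" if "q \<in> C" "q' \<in> C" for q q'
      using C that unfolding Chains_def relation_of_def P_def by auto
    define u where "u = (\<lambda>x. INF q\<in>C. q x)"
    have "sublinear u"
      unfolding u_def using CA False chain bdd by (intro sublinear_chain_Inf) (auto simp: A_def)
    moreover have lower: "u \<le> q" if "q \<in> C" for q
      using that bdd by (auto simp: u_def le_fun_def intro: cINF_lower)
    moreover have "u \<le> p"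
      using False CA lower by (force simp: A_def)
    ultimately show ?thesis by (auto simp: A_def P_def)
  qed
  from predicate_Zorn[OF po this] show ?thesis by (auto simp: A_def P_def)
qed

theorem Hahn_Banach_sublinear:
  fixes p :: "'a::real_vector \<Rightarrow> real"
  assumes p: "sublinear p"
  shows "\<exists>l. linear l \<and> (\<forall>x. l x \<le> p x) \<and> l v = p v"
proof -
  obtain m where m: "sublinear m" "m \<le> sublinear_reduce p v"
    and minimal: "\<And>q. sublinear q \<Longrightarrow> q \<le> m \<Longrightarrow> q = m"
    using exists_minimal_sublinear_below[OF sublinear_sublinear_reduce[OF p, of v]] by blast
  have "sublinear_reduce m y = m" for y
    using minimal sublinear_sublinear_reduce[OF m(1)] sublinear_reduce_le_self[OF m(1)]
    by (auto simp: le_fun_def)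
  then have l: "linear m"
    using sublinear_fixed_by_reduce_imp_linear[OF m(1)] by blast
  have below: "m x \<le> p x" for x
    using m(2) sublinear_reduce_le_self[OF p, of v x] by (auto simp: le_fun_def intro: order_trans)
  have "- m v \<le> - p v"
    using le_funD[OF m(2), of "- v"] sublinear_reduce_neg[OF p, of v] linear_neg[OF l, of v]
    by simp
  with below[of v] have "m v = p v" by simp
  with l below show ?thesis by blast
qed

section \<open>Separation of a point from an open convex set\<close>

definition minkowski_functional :: "'a::real_normed_vector set \<Rightarrow> 'a \<Rightarrow> real" where
  "minkowski_functional K x = Inf {s. 0 < s \<and> inverse s *\<^sub>R x \<in> K}"

lemma open_absorbing:
  fixes K :: "'a::real_normed_vector set"
  assumes "open K" "0 \<in> K"
  shows "\<exists>s>0. inverse s *\<^sub>R x \<in> K"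
proof -
  obtain r where r: "r > 0" "ball 0 r \<subseteq> K" using assms open_contains_ball by blast
  define s where "s = (norm x + 1) / r"
  have s: "s > 0" using r by (simp add: s_def add_nonneg_pos)
  have "norm (inverse s *\<^sub>R x) = norm x * r / (norm x + 1)"
    using r by (simp add: s_def)
  also have "\<dots> < r"
    using r by (simp add: divide_simps add_nonneg_pos)
  finally have "inverse s *\<^sub>R x \<in> ball 0 r" by simp
  with r s show ?thesis by blast
qed

lemma minkowski_functional_le:
  "0 < s \<Longrightarrow> inverse s *\<^sub>R x \<in> K \<Longrightarrow> minkowski_functional K x \<le> s"
  unfolding minkowski_functional_def by (rule cInf_lower) (auto intro: bdd_belowI[of _ 0])

lemma minkowski_functional_greatest:
  fixes K :: "'a::real_normed_vector set"
  assumes "open K" "0 \<in> K" "\<And>s. 0 < s \<Longrightarrow> inverse s *\<^sub>R x \<in> K \<Longrightarrow> b \<le> s"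
  shows "b \<le> minkowski_functional K x"
  unfolding minkowski_functional_def
  by (rule cInf_greatest) (use assms open_absorbing[OF assms(1,2), of x] in auto)

lemma sublinear_minkowski_functional:
  fixes K :: "'a::real_normed_vector set"
  assumes K: "open K" "convex K" "0 \<in> K"
  shows "sublinear (minkowski_functional K)"
proof (rule sublinearI)
  let ?m = "minkowski_functional K"
  fix x y
  have "?m (x + y) \<le> s + t"
    if s: "0 < s" "inverse s *\<^sub>R x \<in> K" and t: "0 < t" "inverse t *\<^sub>R y \<in> K" for s t
  proof (rule minkowski_functional_le)
    have "inverse (s + t) *\<^sub>R (x + y) =
        (s / (s + t)) *\<^sub>R (inverse s *\<^sub>R x) + (t / (s + t)) *\<^sub>R (inverse t *\<^sub>R y)"
      using s t by (simp add: scaleR_add_right divide_simps)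
    also have "\<dots> \<in> K"
      by (rule convexD[OF K(2) s(2) t(2)]) (use s t in \<open>auto simp: divide_simps\<close>)
    finally show "inverse (s + t) *\<^sub>R (x + y) \<in> K" .
  qed (use s t in simp)
  then have "?m (x + y) - t \<le> ?m x" if "0 < t" "inverse t *\<^sub>R y \<in> K" for t
    using that by (intro minkowski_functional_greatest[OF K(1,3)]) force
  then have "?m (x + y) - ?m x \<le> ?m y"
    by (intro minkowski_functional_greatest[OF K(1,3)]) force
  then show "?m (x + y) \<le> ?m x + ?m y" by simp
next
  let ?m = "minkowski_functional K"
  fix a :: real and x assume a: "0 < a"
  show "?m (a *\<^sub>R x) / a \<le> ?m x"
  proof (rule minkowski_functional_greatest[OF K(1,3)])
    fix s assume s: "0 < s" "inverse s *\<^sub>R x \<in> K"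
    have "inverse (a * s) * a = inverse s" using a by simp
    then have "inverse (a * s) *\<^sub>R (a *\<^sub>R x) = inverse s *\<^sub>R x" by (simp only: scaleR_scaleR)
    with s(2) have "inverse (a * s) *\<^sub>R (a *\<^sub>R x) \<in> K" by metis
    then have "?m (a *\<^sub>R x) \<le> a * s"
      using s a by (intro minkowski_functional_le) auto
    then show "?m (a *\<^sub>R x) / a \<le> s" using a by (simp add: divide_simps mult.commute)
  qed
  show "a * ?m x \<le> ?m (a *\<^sub>R x)"
  proof (rule minkowski_functional_greatest[OF K(1,3)])
    fix s assume s: "0 < s" "inverse s *\<^sub>R (a *\<^sub>R x) \<in> K"
    have "inverse (s / a) = inverse s * a" using a by (simp add: field_simps)
    then have "inverse (s / a) *\<^sub>R x = inverse s *\<^sub>R (a *\<^sub>R x)" by (simp only: scaleR_scaleR)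
    with s(2) have "inverse (s / a) *\<^sub>R x \<in> K" by metis
    then have "?m x \<le> s / a"
      using s a by (intro minkowski_functional_le) auto
    then show "a * ?m x \<le> s" using a by (simp add: divide_simps mult.commute)
  qed
qed

lemma minkowski_functional_lt_1:
  fixes K :: "'a::real_normed_vector set"
  assumes "open K" "z \<in> K"
  shows "minkowski_functional K z < 1"
proof -
  obtain e where e: "e > 0" "ball z e \<subseteq> K" using assms open_contains_ball by blast
  define h where "h = e / (2 * (norm z + 1))"
  have h: "h > 0" using e by (simp add: h_def add_nonneg_pos)
  have "e * norm z < e * (2 * (norm z + 1))"
    using e by (intro mult_strict_left_mono) (auto simp: add_nonneg_pos)
  then have "h * norm z < e"
    using e by (simp add: h_def divide_simps add_nonneg_pos)
  then have "(1 + h) *\<^sub>R z \<in> K"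
    using e h by (auto simp: dist_norm algebra_simps)
  then have "minkowski_functional K z \<le> inverse (1 + h)"
    using h by (intro minkowski_functional_le) auto
  also have "\<dots> < 1" using h by (simp add: divide_simps)
  finally show ?thesis .
qed

lemma minkowski_functional_ge_1:
  fixes K :: "'a::real_normed_vector set"
  assumes K: "open K" "convex K" "0 \<in> K" and v: "v \<notin> K"
  shows "1 \<le> minkowski_functional K v"
proof (rule minkowski_functional_greatest[OF K(1,3)])
  fix s assume s: "0 < s" "inverse s *\<^sub>R v \<in> K"
  show "1 \<le> s"
  proof (rule ccontr)
    assume "\<not> 1 \<le> s"
    then have "s *\<^sub>R (inverse s *\<^sub>R v) + (1 - s) *\<^sub>R 0 \<in> K"
      using s K by (intro convexD) auto
    then show False using v s by simp
  qed
qed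

theorem open_convex_separation:
  fixes D :: "'a::real_normed_vector set"
  assumes D: "open D" "convex D" "c \<in> D" and q: "q \<notin> D"
  shows "\<exists>l :: 'a \<Rightarrow> real. linear l \<and> (\<forall>z\<in>D. l z < l q)"
proof -
  define K where "K = (\<lambda>z. z - c) ` D"
  have K: "open K" "convex K" "0 \<in> K"
    using D by (auto simp: K_def open_translation_subtract convex_translation_subtract)
  have inK: "z - c \<in> K \<longleftrightarrow> z \<in> D" for z by (auto simp: K_def)
  obtain l where l: "linear l" "\<And>x. l x \<le> minkowski_functional K x"
      "l (q - c) = minkowski_functional K (q - c)"
    using Hahn_Banach_sublinear[OF sublinear_minkowski_functional[OF K]] by blast
  have "l z < l q" if "z \<in> D" for z
  proof -
    have "l (z - c) < 1"
      using l(2) minkowski_functional_lt_1[OF K(1), of "z - c"] inK that by (meson le_less_trans)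
    moreover have "1 \<le> l (q - c)"
      using minkowski_functional_ge_1[OF K, of "q - c"] inK q l(3) by auto
    ultimately show ?thesis using linear_diff[OF l(1)] by simp
  qed
  with l(1) show ?thesis by blast
qed

section \<open>Holomorphy in complex Banach spaces\<close>

instantiation complex :: complex_banach
begin
definition scaleC_complex :: "complex \<Rightarrow> complex \<Rightarrow> complex" where
  "scaleC_complex a z = a * z"
instance
  by standard (auto simp: scaleC_complex_def scaleR_conv_of_real algebra_simps norm_mult)
end

lemma scaleC_zero_left [simp]: "scaleC 0 x = 0"
  using scaleC_of_real[of 0 x] by simp

lemma scaleC_scaleR_commute: "scaleC a (r *\<^sub>R x) = r *\<^sub>R scaleC a x"
proof -
  have "scaleC a (r *\<^sub>R x) = scaleC a (scaleC (complex_of_real r) x)"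
    by (simp only: scaleC_of_real)
  also have "\<dots> = scaleC (complex_of_real r) (scaleC a x)"
    by (simp only: scaleC_scaleC mult.commute)
  finally show ?thesis by (simp only: scaleC_of_real)
qed

lemma scaleC_Re_Im: "scaleC a x = Re a *\<^sub>R x + Im a *\<^sub>R scaleC \<i> x"
proof -
  have "a = complex_of_real (Re a) + complex_of_real (Im a) * \<i>"
    by (simp add: complex_eq_iff)
  then have "scaleC a x = scaleC (complex_of_real (Re a)) x + scaleC (complex_of_real (Im a)) (scaleC \<i> x)"
    by (metis scaleC_add_left scaleC_scaleC)
  then show ?thesis by (simp only: scaleC_of_real)
qed

lemma scaleC_ii_ii: "scaleC \<i> (scaleC \<i> x) = - x"
  using scaleC_scaleC[of \<i> \<i> x] scaleC_of_real[of "-1" x] by simp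

lemma bounded_linear_scaleC_left: "bounded_linear (\<lambda>a. scaleC a x)"
proof (rule bounded_linear_intro[of _ "norm x"])
  show "scaleC (r *\<^sub>R a) x = r *\<^sub>R scaleC a x" for r a
    by (simp add: scaleR_conv_of_real scaleC_of_real flip: scaleC_scaleC)
qed (simp_all add: scaleC_add_left norm_scaleC)

lemma complex_functional_with_real_part:
  fixes l :: "'a::complex_banach \<Rightarrow> real"
  assumes l: "bounded_linear l"
  shows "\<exists>L. bounded_linear L \<and> (\<forall>a x. L (scaleC a x) = a * L x) \<and> (\<forall>x. Re (L x) = l x)"
proof -
  interpret l: bounded_linear l by (fact l)
  define L where "L x = Complex (l x) (- l (scaleC \<i> x))" for x
  have homogeneous: "L (scaleC a x) = a * L x" for a x
    unfolding L_def
    by (simp add: complex_eq_iff scaleC_Re_Im[of a] scaleC_add_right scaleC_scaleR_commute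
        scaleC_ii_ii l.add l.diff l.scale l.neg)
  obtain K where K: "\<And>x. \<bar>l x\<bar> \<le> norm x * K"
    using l.bounded by (auto simp: real_norm_def)
  have "bounded_linear L"
  proof (rule bounded_linear_intro[of _ "2 * K"])
    show "L (x + y) = L x + L y" for x y
      by (simp add: L_def complex_eq_iff scaleC_add_right l.add)
    show "L (r *\<^sub>R x) = r *\<^sub>R L x" for r x
      using homogeneous[of "complex_of_real r" x] by (simp add: scaleC_of_real scaleR_conv_of_real)
    show "norm (L x) \<le> norm x * (2 * K)" for x
      using cmod_le[of "L x"] K[of x] K[of "scaleC \<i> x"] by (simp add: L_def norm_scaleC)
  qed
  with homogeneous show ?thesis by (auto simp: L_def)
qed

lemma frechet_holomorphic_on_compose:
  fixes f :: "'a::complex_banach \<Rightarrow> 'b::complex_banach" and g :: "'b \<Rightarrow> 'c::complex_banach"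
  assumes f: "frechet_holomorphic_on f D" and fD: "f ` D \<subseteq> E" and g: "frechet_holomorphic_on g E"
  shows "frechet_holomorphic_on (\<lambda>x. g (f x)) D"
  unfolding frechet_holomorphic_on_def
proof
  fix x assume x: "x \<in> D"
  obtain f' where f': "(f has_derivative f') (at x)" "\<forall>a h. f' (scaleC a h) = scaleC a (f' h)"
    using f x unfolding frechet_holomorphic_on_def by blast
  obtain g' where g': "(g has_derivative g') (at (f x))" "\<forall>a h. g' (scaleC a h) = scaleC a (g' h)"
    using g fD x unfolding frechet_holomorphic_on_def by blast
  have "((\<lambda>x. g (f x)) has_derivative (\<lambda>h. g' (f' h))) (at x)"
    using has_derivative_compose[OF f'(1) g'(1)] .
  with f'(2) g'(2) show "\<exists>d. ((\<lambda>x. g (f x)) has_derivative d) (at x) \<and>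
      (\<forall>a h. d (scaleC a h) = scaleC a (d h))"
    by auto
qed

lemma frechet_holomorphic_on_complex_linear:
  assumes "bounded_linear L" "\<And>a x. L (scaleC a x) = scaleC a (L x)"
  shows "frechet_holomorphic_on L S"
  using assms bounded_linear_imp_has_derivative unfolding frechet_holomorphic_on_def by blast

lemma holomorphic_on_imp_frechet_holomorphic_on:
  assumes "f holomorphic_on U" "open U"
  shows "frechet_holomorphic_on f U"
  unfolding frechet_holomorphic_on_def
proof
  fix z assume "z \<in> U"
  with assms have "(f has_field_derivative deriv f z) (at z)"
    by (simp add: holomorphic_derivI)
  then show "\<exists>d. (f has_derivative d) (at z) \<and> (\<forall>a h. d (scaleC a h) = scaleC a (d h))"
    by (auto simp: has_field_derivative_def scaleC_complex_def)
qed

lemma frechet_holomorphic_on_imp_holomorphic_on: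
  fixes f :: "complex \<Rightarrow> complex"
  assumes "frechet_holomorphic_on f S"
  shows "f holomorphic_on S"
  unfolding holomorphic_on_def
proof
  fix z assume "z \<in> S"
  with assms obtain d where d: "(f has_derivative d) (at z)" "\<And>a h. d (a * h) = a * d h"
    by (auto simp: frechet_holomorphic_on_def scaleC_complex_def)
  have "d h = d 1 * h" for h
    using d(2)[of h 1] by (simp add: mult.commute)
  then have "d = (\<lambda>h. d 1 * h)" by blast
  with d(1) have "(f has_field_derivative d 1) (at z)"
    by (simp add: has_field_derivative_def)
  then show "f field_differentiable at z within S"
    using field_differentiable_at_within field_differentiable_def by blast
qed

lemma holomorphic_on_complex_line:
  fixes H :: "'a::complex_banach \<Rightarrow> complex"
  assumes H: "frechet_holomorphic_on H D" and line: "\<And>w. w \<in> S \<Longrightarrow> z + scaleC w u \<in> D"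
  shows "(\<lambda>w. H (z + scaleC w u)) holomorphic_on S"
proof (rule frechet_holomorphic_on_imp_holomorphic_on)
  have "((\<lambda>w. z + scaleC w u) has_derivative (\<lambda>w. scaleC w u)) (at w)" for w
    by (auto intro!: derivative_eq_intros bounded_linear.has_derivative[OF bounded_linear_scaleC_left])
  then have "frechet_holomorphic_on (\<lambda>w. z + scaleC w u) S"
    unfolding frechet_holomorphic_on_def scaleC_complex_def
    by (auto intro!: exI[of _ "\<lambda>w. scaleC w u"] simp: scaleC_scaleC)
  moreover have "(\<lambda>w. z + scaleC w u) ` S \<subseteq> D"
    using line by blast
  ultimately show "frechet_holomorphic_on (\<lambda>w. H (z + scaleC w u)) S"
    using H by (rule frechet_holomorphic_on_compose)
qed

section \<open>Holomorphic maps into the unit disc\<close>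

text \<open>\<open>poincare_factor r = exp d\<close>, where \<open>d\<close> is the hyperbolic distance (curvature \<open>-1\<close>)
  from \<open>0\<close> to a point of modulus \<open>r\<close> in the unit disc. The factor \<open>3 = poincare_factor (1/2)\<close>
  in the steps below is the triangle inequality for \<open>d\<close>.\<close>
definition poincare_factor :: "real \<Rightarrow> real" where
  "poincare_factor r = (1 + r) / (1 - r)"

lemma poincare_factor_step_real:
  fixes r s :: real
  assumes r: "0 \<le> r" "r < 1" and s: "0 \<le> s" "s < 1"
    and close: "3 * (s - r)\<^sup>2 \<le> (1 - r\<^sup>2) * (1 - s\<^sup>2)"
  shows "poincare_factor s \<le> 3 * poincare_factor r"
proof -
  have "(1 + s) * (1 - r) \<le> 3 * ((1 + r) * (1 - s))"
  proof (cases "s \<le> r")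
    case True
    then have "(1 + s) * (1 - r) \<le> (1 + r) * (1 - s)"
      by (simp add: algebra_simps)
    also have "\<dots> \<le> 3 * ((1 + r) * (1 - s))"
      using r s by simp
    finally show ?thesis .
  next
    case False
    have "(1 - r * s)\<^sup>2 = (s - r)\<^sup>2 + (1 - r\<^sup>2) * (1 - s\<^sup>2)"
      by (simp add: power2_eq_square algebra_simps)
    with close have "(2 * (s - r))\<^sup>2 \<le> (1 - r * s)\<^sup>2"
      by (simp add: power2_eq_square algebra_simps)
    moreover have "0 \<le> 1 - r * s"
      using r s by (simp add: mult_le_one)
    ultimately have "2 * (s - r) \<le> 1 - r * s"
      by (rule power2_le_imp_le)
    then show ?thesis by (simp add: algebra_simps)
  qed
  with r s show ?thesis by (simp add: poincare_factor_def divide_simps algebra_simps)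
qed

lemma poincare_factor_step:
  fixes a b :: complex
  assumes a: "norm a < 1" and b: "norm b < 1" and close: "norm (Moebius_function 0 a b) \<le> 1/2"
  shows "poincare_factor (norm b) \<le> 3 * poincare_factor (norm a)"
proof (rule poincare_factor_step_real)
  define X where "X = cmod (1 - cnj a * b)"
  have X: "X\<^sup>2 = (cmod (b - a))\<^sup>2 + (1 - (cmod a)\<^sup>2) * (1 - (cmod b)\<^sup>2)"
    unfolding X_def cmod_power2 by (simp add: algebra_simps power2_eq_square)
  have "0 < (1 - (cmod a)\<^sup>2) * (1 - (cmod b)\<^sup>2)"
    using a b by (simp add: abs_square_less_1)
  with X have "0 < X\<^sup>2"
    using zero_le_power2[of "cmod (b - a)"] by linarith
  then have "X > 0" by (auto simp: X_def)
  with close have "2 * cmod (b - a) \<le> X"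
    by (simp add: X_def Moebius_function_simple norm_divide divide_simps)
  then have "(2 * cmod (b - a))\<^sup>2 \<le> X\<^sup>2"
    by (intro power_mono) auto
  then have "4 * (cmod (b - a))\<^sup>2 \<le> X\<^sup>2"
    by (simp add: power_mult_distrib)
  moreover have "(cmod b - cmod a)\<^sup>2 \<le> (cmod (b - a))\<^sup>2"
    using norm_triangle_ineq3[of b a] abs_le_square_iff[of "cmod b - cmod a" "cmod (b - a)"]
    by simp
  ultimately show "3 * (cmod b - cmod a)\<^sup>2 \<le> (1 - (cmod a)\<^sup>2) * (1 - (cmod b)\<^sup>2)"
    using X by linarith
qed (use a b in auto)

lemma Schwarz_Pick_at_0:
  assumes hol: "f holomorphic_on ball 0 1" and into: "\<And>z. norm z < 1 \<Longrightarrow> norm (f z) < 1"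
    and w: "norm w < 1"
  shows "norm (Moebius_function 0 (f 0) (f w)) \<le> norm w"
proof -
  define g where "g = Moebius_function 0 (f 0) \<circ> f"
  have f0: "norm (f 0) < 1" using into by simp
  have "f ` ball 0 1 \<subseteq> ball 0 1" using into by auto
  with hol Moebius_function_holomorphic[OF f0] have "g holomorphic_on ball 0 1"
    unfolding g_def by (rule holomorphic_on_compose_gen)
  moreover have "g 0 = 0" by (simp add: g_def Moebius_function_eq_zero)
  moreover have "norm (g z) < 1" if "norm z < 1" for z
    unfolding g_def using Moebius_function_norm_lt_1[OF f0 into[OF that]] by simp
  ultimately show ?thesis using Schwarz_Lemma(1)[of g w] w by (simp add: g_def)
qed

definition frechet_holomorphic_disc :: "('a::complex_banach \<Rightarrow> complex) \<Rightarrow> 'a set \<Rightarrow> bool" where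
  "frechet_holomorphic_disc H D \<longleftrightarrow> frechet_holomorphic_on H D \<and> H ` D \<subseteq> ball 0 1"

lemma frechet_holomorphic_disc_compose:
  assumes "frechet_holomorphic_disc H D" "frechet_holomorphic_on f D" "f ` D \<subseteq> D"
  shows "frechet_holomorphic_disc (\<lambda>x. H (f x)) D"
  using assms frechet_holomorphic_on_compose[of f D D H]
  by (auto simp: frechet_holomorphic_disc_def)

text \<open>Restricted to the complex line through \<open>z\<close> and \<open>z'\<close>, \<open>H\<close> is a holomorphic self-map
  of the disc sending \<open>0\<close> to \<open>H z\<close> and \<open>1/2\<close> to \<open>H z'\<close>.\<close>
lemma poincare_factor_harnack_step:
  fixes H :: "'a::complex_banach \<Rightarrow> complex"
  assumes H: "frechet_holomorphic_disc H D" and ball: "ball z \<rho> \<subseteq> D" and "0 < \<rho>"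
    and close: "norm (z' - z) \<le> \<rho> / 2"
  shows "poincare_factor (norm (H z')) \<le> 3 * poincare_factor (norm (H z))"
proof -
  define u where "u = 2 *\<^sub>R (z' - z)"
  have line: "z + scaleC w u \<in> D" if "w \<in> ball 0 1" for w
  proof -
    have "norm (scaleC w u) \<le> cmod w * \<rho>"
      using close by (simp add: u_def norm_scaleC mult_left_mono)
    also have "\<dots> < \<rho>"
      using that \<open>0 < \<rho>\<close> by simp
    finally show ?thesis using ball by (auto simp: dist_norm)
  qed
  define f where "f w = H (z + scaleC w u)" for w
  have hol: "f holomorphic_on ball 0 1"
    unfolding f_def using H line by (intro holomorphic_on_complex_line) (auto simp: frechet_holomorphic_disc_def)
  have into: "norm (f w) < 1" if "norm w < 1" for w
    using H line[of w] that by (auto simp: f_def frechet_holomorphic_disc_def)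
  have "scaleC (1/2 :: complex) u = z' - z"
    using scaleC_of_real[of "1/2" u] by (simp add: u_def)
  then have "f (1/2) = H z'" by (simp add: f_def)
  moreover have "f 0 = H z" by (simp add: f_def)
  moreover have "norm (Moebius_function 0 (f 0) (f (1/2))) \<le> 1/2"
    using Schwarz_Pick_at_0[OF hol into, of "1/2"] by simp
  ultimately show ?thesis
    using poincare_factor_step into[of 0] into[of "1/2"] by fastforce
qed

lemma bounded_by_geometric_growth:
  fixes f :: "nat \<Rightarrow> real"
  assumes step: "\<And>k. k < n \<Longrightarrow> f (Suc k) \<le> c * f k" and c: "0 \<le> c"
  shows "f n \<le> c ^ n * f 0"
  using step
proof (induction n)
  case (Suc n)
  then have "f (Suc n) \<le> c * f n" by simp
  also have "\<dots> \<le> c * (c ^ n * f 0)"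
    using Suc c by (intro mult_left_mono) auto
  finally show ?case by simp
qed simp

lemma ball_subset_convex_segment:
  fixes D :: "'a::real_normed_vector set"
  assumes "convex D" "ball a \<rho> \<subseteq> D" "ball b \<rho> \<subseteq> D" "0 \<le> \<theta>" "\<theta> \<le> 1"
  shows "ball (a + \<theta> *\<^sub>R (b - a)) \<rho> \<subseteq> D"
proof
  fix y assume "y \<in> ball (a + \<theta> *\<^sub>R (b - a)) \<rho>"
  define v where "v = y - (a + \<theta> *\<^sub>R (b - a))"
  have "norm v < \<rho>"
    using \<open>y \<in> _\<close> by (simp add: v_def dist_norm norm_minus_commute)
  then have "a + v \<in> ball a \<rho>" "b + v \<in> ball b \<rho>"
    by (simp_all add: dist_norm)
  with assms(2,3) have "(1 - \<theta>) *\<^sub>R (a + v) + \<theta> *\<^sub>R (b + v) \<in> D"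
    using convexD_alt[OF assms(1)] assms(4,5) by blast
  then show "y \<in> D"
    by (simp add: v_def algebra_simps)
qed

lemma poincare_factor_harnack_segment:
  fixes H :: "'a::complex_banach \<Rightarrow> complex"
  assumes D: "convex D" and H: "frechet_holomorphic_disc H D"
    and balls: "ball a \<rho> \<subseteq> D" "ball b \<rho> \<subseteq> D" "0 < \<rho>" and dist: "norm (b - a) \<le> real N * \<rho> / 2"
  shows "poincare_factor (norm (H b)) \<le> 3 ^ N * poincare_factor (norm (H a))"
proof (cases "N = 0")
  case True
  with dist show ?thesis by simp
next
  case False
  define z where "z k = a + (real k / real N) *\<^sub>R (b - a)" for k
  have "poincare_factor (norm (H (z (Suc k)))) \<le> 3 * poincare_factor (norm (H (z k)))"
    if "k < N" for k
  proof (rule poincare_factor_harnack_step[OF H _ \<open>0 < \<rho>\<close>])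
    show "ball (z k) \<rho> \<subseteq> D"
      unfolding z_def using that by (intro ball_subset_convex_segment[OF D balls(1,2)]) auto
    have "z (Suc k) - z k = (real (Suc k) / real N - real k / real N) *\<^sub>R (b - a)"
      by (simp add: z_def scaleR_diff_left)
    also have "real (Suc k) / real N - real k / real N = 1 / real N"
      by (simp add: diff_divide_distrib[symmetric])
    finally have "z (Suc k) - z k = (1 / real N) *\<^sub>R (b - a)" .
    with dist False show "norm (z (Suc k) - z k) \<le> \<rho> / 2"
      by (simp add: divide_simps mult.commute)
  qed
  from bounded_by_geometric_growth[of N "\<lambda>k. poincare_factor (norm (H (z k)))", OF this] False
  show ?thesis by (simp add: z_def)
qed

lemma half_plane_to_disc:
  fixes w :: complex and a :: real
  assumes a: "a > 0" and w: "Re w < a"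
  shows "cmod (w / (2 * a - w)) < 1"
    and "a / (4 * (a - Re w)) \<le> poincare_factor (cmod (w / (2 * a - w)))"
proof -
  define X where "X = (cmod (2 * a - w))\<^sup>2"
  define \<rho> where "\<rho> = cmod (w / (2 * a - w))"
  have "a\<^sup>2 \<le> (2 * a - Re w)\<^sup>2"
    using a w by (intro power_mono) auto
  then have Xa: "a\<^sup>2 \<le> X"
    unfolding X_def cmod_power2 by (simp add: add_increasing2)
  have X: "X > 0"
    using Xa a zero_less_power[of a 2] by linarith
  have "X - (cmod w)\<^sup>2 = 4 * a * (a - Re w)"
    unfolding X_def cmod_power2 by (simp add: power2_eq_square algebra_simps)
  moreover have "\<rho>\<^sup>2 = (cmod w)\<^sup>2 / X"
    by (simp add: \<rho>_def X_def norm_divide power_divide)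
  ultimately have 1: "1 - \<rho>\<^sup>2 = 4 * a * (a - Re w) / X"
    using X by (simp add: field_simps)
  moreover have "0 < 4 * a * (a - Re w) / X"
    using a w X by simp
  ultimately have "\<rho>\<^sup>2 < 1" by linarith
  then show "cmod (w / (2 * a - w)) < 1"
    unfolding \<rho>_def by (simp add: power_less_one_iff abs_square_less_1)
  then have \<rho>: "0 \<le> \<rho>" "\<rho> < 1" by (auto simp: \<rho>_def)
  have "1 - \<rho> \<le> 1 - \<rho>\<^sup>2"
    using \<rho> by (simp add: power2_eq_square mult_left_le)
  also have "\<dots> \<le> 4 * a * (a - Re w) / a\<^sup>2"
    unfolding 1 using a w Xa X by (intro divide_left_mono) auto
  also have "\<dots> = 4 * (a - Re w) / a"
    using a by (simp add: power2_eq_square)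
  finally have "a / (4 * (a - Re w)) \<le> 1 / (1 - \<rho>)"
    using \<rho> a w by (simp add: divide_simps mult.commute)
  also have "\<dots> \<le> poincare_factor \<rho>"
    unfolding poincare_factor_def using \<rho> by (intro divide_right_mono) auto
  finally show "a / (4 * (a - Re w)) \<le> poincare_factor (cmod (w / (2 * a - w)))"
    by (simp add: \<rho>_def)
qed

text \<open>\<open>g\<close> is a complexified functional separating \<open>q\<close> from \<open>D\<close>, followed by a Cayley map
  of the half-plane it bounds onto the disc.\<close>
lemma separating_disc_function:
  fixes D :: "'a::complex_banach set"
  assumes D: "open D" "convex D" and ball: "ball c r \<subseteq> D" and r: "r > 0" and q: "q \<notin> D"
  shows "\<exists>g. frechet_holomorphic_disc g D \<and> g c = 0 \<and>
           (\<forall>y\<in>D. r \<le> 8 * poincare_factor (norm (g y)) * norm (q - y))"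
proof -
  have c: "c \<in> D" using ball r by auto
  obtain l :: "'a \<Rightarrow> real" where l: "linear l" "\<And>z. z \<in> D \<Longrightarrow> l z < l q"
    using open_convex_separation[OF D c q] by blast
  define a where "a = l q - l c"
  have a: "a > 0" using l(2)[OF c] by (simp add: a_def)
  have l_le: "l v \<le> (2 * a / r) * norm v" for v
  proof (cases "v = 0")
    case True
    then show ?thesis using linear_0[OF l(1)] by simp
  next
    case False
    have "c + (r / (2 * norm v)) *\<^sub>R v \<in> D"
      using ball r False by (auto simp: dist_norm)
    then have "(r / (2 * norm v)) * l v < a"
      using l(2) linear_add[OF l(1)] linear_scale[OF l(1)] by (fastforce simp: a_def)
    then show ?thesis using False r by (simp add: field_simps)
  qed
  have "bounded_linear l"
  proof (rule bounded_linear_intro[of _ "2 * a / r"])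
    show "norm (l v) \<le> norm v * (2 * a / r)" for v
      using l_le[of v] l_le[of "- v"] linear_neg[OF l(1), of v] by (simp add: mult.commute)
  qed (simp_all add: linear_add[OF l(1)] linear_scale[OF l(1)])
  then obtain L where L: "bounded_linear L" "\<And>a x. L (scaleC a x) = a * L x" "\<And>x. Re (L x) = l x"
    using complex_functional_with_real_part by blast
  define U where "U = {w. Re w < Re (L c) + a}"
  define \<phi> where "\<phi> w = (w - L c) / (2 * a - (w - L c))" for w
  define g where "g = (\<lambda>x. \<phi> (L x))"
  have LU: "L ` D \<subseteq> U"
    using l(2) L(3) by (auto simp: U_def a_def)
  have "\<phi> holomorphic_on U"
    unfolding \<phi>_def U_def
    using a by (intro holomorphic_intros) (auto simp: complex_eq_iff)
  then have \<phi>: "frechet_holomorphic_on \<phi> U"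
    by (rule holomorphic_on_imp_frechet_holomorphic_on) (simp add: U_def open_halfspace_Re_lt)
  have "frechet_holomorphic_on L D"
    using L(1,2) by (intro frechet_holomorphic_on_complex_linear) (simp_all add: scaleC_complex_def)
  from frechet_holomorphic_on_compose[OF this LU \<phi>] have "frechet_holomorphic_on g D"
    unfolding g_def .
  moreover have Re_lt: "Re (L y - L c) < a" and disc: "norm (g y) < 1" if "y \<in> D" for y
    using half_plane_to_disc(1)[OF a] l(2)[OF that] L(3) by (auto simp: g_def \<phi>_def a_def)
  moreover have "g c = 0" by (simp add: g_def \<phi>_def)
  moreover have "r \<le> 8 * poincare_factor (norm (g y)) * norm (q - y)" if y: "y \<in> D" for y
  proof -
    have "a - Re (L y - L c) = l (q - y)"
      using L(3) linear_diff[OF l(1)] by (simp add: a_def)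
    then have "r \<le> 8 * (a / (4 * (a - Re (L y - L c)))) * norm (q - y)"
      using l_le[of "q - y"] Re_lt[OF y] a r by (simp add: field_simps)
    also have "\<dots> \<le> 8 * poincare_factor (norm (g y)) * norm (q - y)"
      using half_plane_to_disc(2)[OF a Re_lt[OF y]]
      by (intro mult_right_mono) (simp_all add: g_def \<phi>_def)
    finally show ?thesis .
  qed
  ultimately show ?thesis by (auto simp: frechet_holomorphic_disc_def)
qed

section \<open>Distance to the boundary\<close>

lemma ball_subset_of_infdist_frontier:
  fixes D :: "'a::real_normed_vector set"
  assumes x: "x \<in> D" and e: "e \<le> infdist x (frontier D)"
  shows "ball x e \<subseteq> D"
proof
  fix y assume y: "y \<in> ball x e"
  show "y \<in> D"
  proof (rule ccontr)
    assume "y \<notin> D"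
    with x obtain f where f: "f \<in> closed_segment x y" "f \<in> frontier D"
      using connected_Int_frontier[OF connected_segment, of x y D] by auto
    then have "infdist x (frontier D) \<le> dist x y"
      using infdist_le[OF f(2), of x] segment_bound1[OF f(1)] by (simp add: dist_norm norm_minus_commute)
    with y e show False by simp
  qed
qed

lemma infdist_frontier_ge_of_ball:
  fixes D :: "'a::real_normed_vector set"
  assumes "open D" "ball y e \<subseteq> D" "frontier D \<noteq> {}"
  shows "e \<le> infdist y (frontier D)"
  unfolding infdist_notempty[OF assms(3)]
proof (rule cINF_greatest[OF assms(3)])
  fix a assume "a \<in> frontier D"
  then have "a \<notin> D" using assms(1) frontier_disjoint_eq by blast
  with assms(2) show "e \<le> dist y a" by (auto simp: not_le[symmetric])
qed

lemma strictly_inside_iff_uniform_balls: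
  fixes D :: "'a::real_normed_vector set"
  assumes "open D" "frontier D \<noteq> {}"
  shows "strictly_inside S D \<longleftrightarrow> S \<subseteq> D \<and> bounded S \<and> (\<exists>e>0. \<forall>x\<in>S. ball x e \<subseteq> D)"
proof
  assume "strictly_inside S D"
  then obtain e where "S \<subseteq> D" "bounded S" "e > 0" "\<forall>x\<in>S. e \<le> infdist x (frontier D)"
    by (auto simp: strictly_inside_def)
  then show "S \<subseteq> D \<and> bounded S \<and> (\<exists>e>0. \<forall>x\<in>S. ball x e \<subseteq> D)"
    using ball_subset_of_infdist_frontier by blast
next
  assume "S \<subseteq> D \<and> bounded S \<and> (\<exists>e>0. \<forall>x\<in>S. ball x e \<subseteq> D)"
  then show "strictly_inside S D"
    using infdist_frontier_ge_of_ball[OF assms(1) _ assms(2)] unfolding strictly_inside_def by blast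
qed

text \<open>Because \<open>infdist x {} = 0\<close>. For a bounded nonempty open \<open>D\<close> an empty frontier occurs
  only in the zero space.\<close>
lemma strictly_inside_empty_frontier:
  assumes "frontier D = {}" "strictly_inside S D"
  shows "S = {}"
proof (rule ccontr)
  assume "S \<noteq> {}"
  with assms obtain e x where "0 < e" "x \<in> S" "e \<le> infdist x (frontier D)"
    unfolding strictly_inside_def by blast
  with assms(1) show False by (simp add: infdist_def)
qed

lemma ball_subset_of_poincare_factor_bound:
  fixes D :: "'a::complex_banach set"
  assumes D: "open D" "convex D" and ball: "ball c r \<subseteq> D" "0 < r" and y: "y \<in> D" and "0 < M"
    and bound: "\<And>g. frechet_holomorphic_disc g D \<Longrightarrow> g c = 0 \<Longrightarrow> poincare_factor (norm (g y)) \<le> M"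
  shows "ball y (r / (8 * M)) \<subseteq> D"
proof
  fix q assume q: "q \<in> ball y (r / (8 * M))"
  show "q \<in> D"
  proof (rule ccontr)
    assume "q \<notin> D"
    with separating_disc_function[OF D ball] obtain g where
      g: "frechet_holomorphic_disc g D" "g c = 0" "r \<le> 8 * poincare_factor (norm (g y)) * norm (q - y)"
      using y by blast
    note g(3)
    also have "\<dots> \<le> 8 * M * norm (q - y)"
      using bound[OF g(1,2)] by (intro mult_right_mono) auto
    also have "\<dots> < r"
      using q \<open>0 < M\<close> by (simp add: dist_norm norm_minus_commute field_simps)
    finally show False by simp
  qed
qed

section \<open>Orbits of holomorphic semigroups\<close>

lemma continuous_holo_semigroupD:
  assumes "continuous_holo_semigroup F D"
  shows "\<And>t. 0 \<le> t \<Longrightarrow> frechet_holomorphic_on (F t) D"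
    and "\<And>t. 0 \<le> t \<Longrightarrow> F t ` D \<subseteq> D"
    and "\<And>t s x. 0 \<le> t \<Longrightarrow> 0 \<le> s \<Longrightarrow> x \<in> D \<Longrightarrow> F (t + s) x = F t (F s x)"
    and "\<And>x. x \<in> D \<Longrightarrow> ((\<lambda>t. F t x) \<longlongrightarrow> x) (at_right 0)"
  using assms unfolding continuous_holo_semigroup_def by blast+

lemma continuous_holo_semigroup_zero:
  assumes F: "continuous_holo_semigroup F D" and x: "x \<in> D"
  shows "F 0 x = x"
proof -
  have F0x: "F 0 x \<in> D"
    using continuous_holo_semigroupD(2)[OF F, of 0] x by blast
  have "F t (F 0 x) = F t x" if "0 < t" for t
    using continuous_holo_semigroupD(3)[OF F, of t 0 x] that x by simp
  then have "\<forall>\<^sub>F t in at_right 0. F t (F 0 x) = F t x"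
    unfolding eventually_at_right_field using zero_less_one by blast
  with continuous_holo_semigroupD(4)[OF F F0x] have "((\<lambda>t. F t x) \<longlongrightarrow> F 0 x) (at_right 0)"
    by (rule Lim_transform_eventually)
  with continuous_holo_semigroupD(4)[OF F x] show ?thesis
    by (rule tendsto_unique[OF trivial_limit_at_right_real, rotated])
qed

lemma continuous_holo_semigroup_near_zero:
  assumes F: "continuous_holo_semigroup F D" and x: "x \<in> D" and \<epsilon>: "0 < \<epsilon>"
  obtains \<delta> where "0 < \<delta>" "\<And>t. 0 \<le> t \<Longrightarrow> t \<le> \<delta> \<Longrightarrow> norm (F t x - x) \<le> \<epsilon>"
proof -
  have "\<forall>\<^sub>F t in at_right 0. dist (F t x) x < \<epsilon>"
    using continuous_holo_semigroupD(4)[OF F x] \<epsilon> by (rule tendstoD)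
  then obtain b where b: "0 < b" "\<And>t. 0 < t \<Longrightarrow> t < b \<Longrightarrow> dist (F t x) x < \<epsilon>"
    unfolding eventually_at_right_field by blast
  have "norm (F t x - x) \<le> \<epsilon>" if "0 \<le> t" "t \<le> b / 2" for t
  proof (cases "t = 0")
    case True
    with \<epsilon> show ?thesis by (simp add: continuous_holo_semigroup_zero[OF F x])
  next
    case False
    with that b(1) have "dist (F t x) x < \<epsilon>" by (intro b(2)) auto
    then show ?thesis by (simp add: dist_norm)
  qed
  with b(1) show ?thesis by (intro that[of "b / 2"]) auto
qed

text \<open>Along the orbit \<open>t \<mapsto> F t c\<close> each step of length \<open>t / n \<le> \<delta>\<close> is the image under
  \<open>F (k t / n)\<close> of the short step from \<open>c\<close> to \<open>F (t / n) c\<close>, and \<open>H \<circ> F (k t / n)\<close> is again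
  a holomorphic map into the disc.\<close>
lemma poincare_factor_harnack_orbit:
  assumes F: "continuous_holo_semigroup F D" and H: "frechet_holomorphic_disc H D"
    and ball: "ball c r \<subseteq> D" "0 < r"
    and near: "\<And>s. 0 \<le> s \<Longrightarrow> s \<le> \<delta> \<Longrightarrow> norm (F s c - c) \<le> r / 2"
    and t: "0 \<le> t" "t \<le> real n * \<delta>"
  shows "poincare_factor (norm (H (F t c))) \<le> 3 ^ n * poincare_factor (norm (H c))"
proof -
  have c: "c \<in> D" using ball by auto
  show ?thesis
  proof (cases "n = 0")
    case True
    with t show ?thesis by (simp add: continuous_holo_semigroup_zero[OF F c])
  next
    case False
    define s where "s = t / real n"
    have s: "0 \<le> s" "s \<le> \<delta>" using t False by (auto simp: s_def field_simps)
    have "poincare_factor (norm (H (F (real (Suc k) * s) c)))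
        \<le> 3 * poincare_factor (norm (H (F (real k * s) c)))" for k
    proof -
      have "F (real (Suc k) * s) c = F (real k * s + s) c"
        by (simp add: algebra_simps)
      also have "\<dots> = F (real k * s) (F s c)"
        using continuous_holo_semigroupD(3)[OF F] s c by simp
      moreover have "frechet_holomorphic_disc (\<lambda>x. H (F (real k * s) x)) D"
        using continuous_holo_semigroupD(1,2)[OF F] s by (intro frechet_holomorphic_disc_compose[OF H]) simp_all
      ultimately show ?thesis
        using poincare_factor_harnack_step[OF _ ball(1) ball(2) near[OF s]] by simp
    qed
    from bounded_by_geometric_growth[of n "\<lambda>k. poincare_factor (norm (H (F (real k * s) c)))", OF this]
      False show ?thesis
      by (simp add: s_def continuous_holo_semigroup_zero[OF F c])
  qed
qed

lemma poincare_factor_harnack_semigroup: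
  fixes D :: "'a::complex_banach set"
  assumes D: "convex D" and F: "continuous_holo_semigroup F D" and H: "frechet_holomorphic_disc H D"
    and balls: "ball c \<rho> \<subseteq> D" "ball x \<rho> \<subseteq> D" "0 < \<rho>" and x: "norm (x - c) \<le> real N * \<rho> / 2"
    and near: "\<And>s. 0 \<le> s \<Longrightarrow> s \<le> \<delta> \<Longrightarrow> norm (F s c - c) \<le> \<rho> / 2"
    and t: "0 \<le> t" "t \<le> real n * \<delta>"
  shows "poincare_factor (norm (H (F t x))) \<le> 3 ^ (N + n) * poincare_factor (norm (H c))"
proof -
  have "frechet_holomorphic_disc (\<lambda>z. H (F t z)) D"
    using continuous_holo_semigroupD(1,2)[OF F] t by (intro frechet_holomorphic_disc_compose[OF H])
  then have "poincare_factor (norm (H (F t x))) \<le> 3 ^ N * poincare_factor (norm (H (F t c)))"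
    using poincare_factor_harnack_segment[OF D _ balls x] by blast
  also have "\<dots> \<le> 3 ^ N * (3 ^ n * poincare_factor (norm (H c)))"
    using poincare_factor_harnack_orbit[OF F H balls(1,3) near t] by (intro mult_left_mono) auto
  finally show ?thesis by (simp add: power_add)
qed

lemma continuous_holo_semigroup_uniform_balls:
  fixes D :: "'a::complex_banach set"
  assumes D: "open D" "bounded D" "convex D" "D \<noteq> {}" and F: "continuous_holo_semigroup F D"
    and Ds: "0 < e" "\<And>x. x \<in> Ds \<Longrightarrow> ball x e \<subseteq> D"
  shows "\<exists>\<epsilon>>0. \<forall>x\<in>Ds. \<forall>t\<in>{0..T}. ball (F t x) \<epsilon> \<subseteq> D"
proof -
  obtain c r where c: "0 < r" "ball c r \<subseteq> D"
    using D(1,4) open_contains_ball by blast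
  define \<rho> where "\<rho> = min e r"
  have "ball x \<rho> \<subseteq> D" if "x \<in> Ds" for x
    using Ds(2)[OF that] subset_ball[of \<rho> e x] by (auto simp: \<rho>_def)
  moreover have "ball c \<rho> \<subseteq> D"
    using c(2) subset_ball[of \<rho> r c] by (auto simp: \<rho>_def)
  ultimately have \<rho>: "0 < \<rho>" "ball c \<rho> \<subseteq> D" "\<And>x. x \<in> Ds \<Longrightarrow> ball x \<rho> \<subseteq> D"
    using c Ds by (auto simp: \<rho>_def)
  then have "c \<in> D" by auto
  obtain R where R: "\<And>x. x \<in> D \<Longrightarrow> norm (x - c) \<le> R"
    using D(2) bounded_any_center[of D c] by (auto simp: dist_norm norm_minus_commute)
  obtain N :: nat where N: "2 * R / \<rho> \<le> real N"
    using real_arch_simple by blast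
  obtain \<delta> where \<delta>: "0 < \<delta>" "\<And>s. 0 \<le> s \<Longrightarrow> s \<le> \<delta> \<Longrightarrow> norm (F s c - c) \<le> \<rho> / 2"
    using continuous_holo_semigroup_near_zero[OF F \<open>c \<in> D\<close>, of "\<rho> / 2"] \<rho> by auto
  obtain n :: nat where n: "T / \<delta> \<le> real n"
    using real_arch_simple by blast
  have "ball (F t x) (\<rho> / (8 * 3 ^ (N + n))) \<subseteq> D" if x: "x \<in> Ds" and t: "t \<in> {0..T}" for x t
  proof (rule ball_subset_of_poincare_factor_bound[OF D(1,3) \<rho>(2,1)])
    have "x \<in> D" using \<rho>(1) \<rho>(3)[OF x] by auto
    then show "F t x \<in> D"
      using continuous_holo_semigroupD(2)[OF F] t by auto
    have "norm (x - c) \<le> real N * \<rho> / 2"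
      using R[OF \<open>x \<in> D\<close>] N \<rho>(1) by (simp add: field_simps)
    moreover have "t \<le> real n * \<delta>"
      using n t \<delta>(1) by (simp add: field_simps)
    ultimately show "poincare_factor (norm (g (F t x))) \<le> 3 ^ (N + n)"
      if "frechet_holomorphic_disc g D" "g c = 0" for g
      using poincare_factor_harnack_semigroup[OF D(3) F that(1) \<rho>(2) \<rho>(3)[OF x] \<rho>(1) _ \<delta>(2)] t that(2)
      by (simp add: poincare_factor_def)
  qed simp
  then show ?thesis
    using \<rho>(1) by (intro exI[of _ "\<rho> / (8 * 3 ^ (N + n))"]) auto
qed

theorem lemma2p5:
  fixes D :: "'a::complex_banach set" and F :: "real \<Rightarrow> 'a \<Rightarrow> 'a"
  assumes "open D" and "connected D" and "D \<noteq> {}" and "bounded D" and "convex D"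
    and "continuous_holo_semigroup F D"
  shows "\<forall>Ds t0. strictly_inside Ds D \<and> t0 > 0 \<longrightarrow>
           strictly_inside {F t x | x t. x \<in> Ds \<and> t \<in> {0..t0}} D"
proof (intro allI impI)
  fix Ds and t0 :: real
  assume Ds: "strictly_inside Ds D \<and> t0 > 0"
  define S where "S = {F t x | x t. x \<in> Ds \<and> t \<in> {0..t0}}"
  have "Ds \<subseteq> D"
    using Ds by (simp add: strictly_inside_def)
  then have "S \<subseteq> D"
    using continuous_holo_semigroupD(2)[OF assms(6)] by (auto simp: S_def)
  then have S: "S \<subseteq> D" "bounded S"
    using assms(4) bounded_subset by auto
  show "strictly_inside S D"
  proof (cases "frontier D = {}")
    case True
    with Ds have "Ds = {}" using strictly_inside_empty_frontier by blast
    then have "S = {}" by (simp add: S_def)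
    then show ?thesis by (simp add: strictly_inside_def gt_ex)
  next
    case False
    from Ds have "\<exists>e>0. \<forall>x\<in>Ds. ball x e \<subseteq> D"
      unfolding strictly_inside_iff_uniform_balls[OF assms(1) False] by simp
    then obtain e where "0 < e" "\<And>x. x \<in> Ds \<Longrightarrow> ball x e \<subseteq> D"
      by blast
    with continuous_holo_semigroup_uniform_balls[OF assms(1,4,5,3,6)] obtain \<epsilon>
      where "0 < \<epsilon>" "\<forall>x\<in>Ds. \<forall>t\<in>{0..t0}. ball (F t x) \<epsilon> \<subseteq> D"
      by meson
    then have "\<forall>y\<in>S. ball y \<epsilon> \<subseteq> D"
      unfolding S_def by blast
    with S \<open>0 < \<epsilon>\<close> show ?thesis
      unfolding strictly_inside_iff_uniform_balls[OF assms(1) False] by blast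
  qed
qed

end
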